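(* There is an absolute constant $A \geq 1$ such that the following holds. Let $L = \{(ay+b,y,\tfrac{1}{2}by+c) : y \in \mathbb{R}\}$ with $a,b,c \in \mathbb{R}$ be a horizontal line, and define $i_{L}(x,y,t) := (ay+b,y,\tfrac{1}{2}by+c)$. Then $$d((x,y,t),i_{L}(x,y,t)) \leq A(1+|a|)\operatorname{dist}((x,y,t),L), \qquad (x,y,t) \in \mathbb{H}.$$
   Context: $\mathbb{H}$ is $\mathbb{R}^{3}$ with group law $(x_{1},y_{1},t_{1}) \cdot (x_{2},y_{2},t_{2}) = (x_{1}+x_{2},y_{1}+y_{2},t_{1}+t_{2}+\tfrac{1}{2}(x_{1}y_{2}-x_{2}y_{1}))$ and metric $d(p,q) = \|q^{-1}\cdot p\|$ with $\|(x,y,t)\| = \max\{\sqrt{x^{2}+y^{2}},\sqrt{|t|}\}$; $\operatorname{dist}$ is w.r.t. $d$. *)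

theory Defs
  imports "HOL-Analysis.Analysis"
begin

type_synonym heis = "real \<times> real \<times> real"

definition heis_mult :: "heis \<Rightarrow> heis \<Rightarrow> heis" where
  "heis_mult p q = (case p of (x1,y1,t1) \<Rightarrow> case q of (x2,y2,t2) \<Rightarrow>
     (x1+x2, y1+y2, t1+t2 + (1/2)*(x1*y2 - x2*y1)))"

definition heis_inv :: "heis \<Rightarrow> heis" where
  "heis_inv p = (case p of (x,y,t) \<Rightarrow> (-x,-y,-t))"

definition heis_norm :: "heis \<Rightarrow> real" where
  "heis_norm p = (case p of (x,y,t) \<Rightarrow> max (sqrt (x^2+y^2)) (sqrt \<bar>t\<bar>))"

definition heis_d :: "heis \<Rightarrow> heis \<Rightarrow> real" where
  "heis_d p q = heis_norm (heis_mult (heis_inv q) p)"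

definition heis_dist_set :: "heis \<Rightarrow> heis set \<Rightarrow> real" where
  "heis_dist_set p S = Inf (heis_d p ` S)"

definition hline :: "real \<Rightarrow> real \<Rightarrow> real \<Rightarrow> heis set" where
  "hline a b c = {(a*y+b, y, (1/2)*b*y + c) | y. True}"

definition iL :: "real \<Rightarrow> real \<Rightarrow> real \<Rightarrow> heis \<Rightarrow> heis" where
  "iL a b c p = (case p of (x,y,t) \<Rightarrow> (a*y+b, y, (1/2)*b*y + c))"

end

(* The constant A = 2 works. By Cauchy-Schwarz applied to the area term of the group law,
   the gauge is subadditive, so d satisfies the triangle inequality. If q_w is the point of L
   with y-coordinate w, then i_L(p) = q_y for p = (x, y, t), and q_y^-1 q_w = (a(w - y), w - y, 0)
   is horizontal, so d(q_w, q_y) = sqrt (1 + a^2) |w - y| <= (1 + |a|) d(p, q_w), the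
   y-coordinate being 1-Lipschitz. The triangle inequality through q_w then gives
   d(p, i_L(p)) <= (2 + |a|) d(p, q_w) <= 2 (1 + |a|) d(p, q_w). *)
theory Submission
  imports Defs
begin

lemma heis_mult_assoc: "heis_mult (heis_mult p q) r = heis_mult p (heis_mult q r)"
  by (cases p; cases q; cases r) (simp add: heis_mult_def field_simps)

lemma heis_mult_inv_right: "heis_mult p (heis_inv p) = (0, 0, 0)"
  by (cases p) (simp add: heis_mult_def heis_inv_def)

lemma heis_mult_zero_left: "heis_mult (0, 0, 0) p = p"
  by (cases p) (simp add: heis_mult_def)

lemma heis_norm_nonneg: "0 \<le> heis_norm p"
  by (cases p) (simp add: heis_norm_def le_max_iff_disj)

lemma heis_norm_mult_le: "heis_norm (heis_mult p q) \<le> heis_norm p + heis_norm q"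
proof -
  obtain x1 y1 t1 x2 y2 t2 where pq: "p = (x1, y1, t1)" "q = (x2, y2, t2)"
    by (cases p; cases q) auto
  define N1 N2 where "N1 = heis_norm p" and "N2 = heis_norm q"
  have z1: "sqrt (x1\<^sup>2 + y1\<^sup>2) \<le> N1" and t1: "sqrt \<bar>t1\<bar> \<le> N1"
    and z2: "sqrt (x2\<^sup>2 + y2\<^sup>2) \<le> N2" and t2: "sqrt \<bar>t2\<bar> \<le> N2"
    by (simp_all add: N1_def N2_def pq heis_norm_def)
  have N: "0 \<le> N1" "0 \<le> N2"
    using heis_norm_nonneg by (simp_all add: N1_def N2_def)
  have horizontal: "sqrt ((x1 + x2)\<^sup>2 + (y1 + y2)\<^sup>2) \<le> N1 + N2"
    using real_sqrt_sum_squares_triangle_ineq[of x1 x2 y1 y2] z1 z2 by linarith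
  have "\<bar>x1 * y2 - x2 * y1\<bar> \<le> sqrt (x1\<^sup>2 + y1\<^sup>2) * sqrt (x2\<^sup>2 + y2\<^sup>2)"
    using Cauchy_Schwarz_ineq2[of "(x1, y1)" "(y2, - x2)"]
    by (simp add: inner_Pair norm_Pair algebra_simps power2_eq_square)
  also have "\<dots> \<le> N1 * N2"
    using z1 z2 N by (intro mult_mono) auto
  finally have area: "\<bar>x1 * y2 - x2 * y1\<bar> \<le> N1 * N2" .
  have "\<bar>t1\<bar> \<le> N1\<^sup>2" "\<bar>t2\<bar> \<le> N2\<^sup>2"
    using t1 t2 by (simp_all add: real_sqrt_le_iff sqrt_le_D)
  then have "\<bar>t1 + t2 + 1/2 * (x1 * y2 - x2 * y1)\<bar> \<le> (N1 + N2)\<^sup>2"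
    using area N by (simp add: power2_eq_square algebra_simps abs_le_iff)
  then have vertical: "sqrt \<bar>t1 + t2 + 1/2 * (x1 * y2 - x2 * y1)\<bar> \<le> N1 + N2"
    using N by (simp add: real_sqrt_le_iff real_le_lsqrt)
  show ?thesis
    using horizontal vertical by (simp add: pq heis_mult_def heis_norm_def N1_def N2_def)
qed

lemma heis_d_triangle: "heis_d p r \<le> heis_d p q + heis_d q r"
proof -
  have "heis_mult (heis_mult (heis_inv r) q) (heis_mult (heis_inv q) p)
      = heis_mult (heis_inv r) (heis_mult (heis_mult q (heis_inv q)) p)"
    by (simp add: heis_mult_assoc)
  also have "\<dots> = heis_mult (heis_inv r) p"
    by (simp add: heis_mult_inv_right heis_mult_zero_left)
  finally show ?thesis
    unfolding heis_d_def by (metis add.commute heis_norm_mult_le)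
qed

lemma le_heis_dist_set:
  assumes "S \<noteq> {}" and "0 < k" and "\<And>q. q \<in> S \<Longrightarrow> r \<le> k * heis_d p q"
  shows "r \<le> k * heis_dist_set p S"
proof -
  have "r / k \<le> Inf (heis_d p ` S)"
    using assms by (intro cInf_greatest) (auto simp: divide_le_eq mult.commute)
  then show ?thesis
    using \<open>0 < k\<close> by (simp add: heis_dist_set_def divide_le_eq mult.commute)
qed

lemma abs_diff_snd_le_heis_d: "\<bar>y - w\<bar> \<le> heis_d (x, y, t) (u, w, s)"
proof -
  have "\<bar>y - w\<bar> \<le> sqrt ((x - u)\<^sup>2 + (y - w)\<^sup>2)"
    by (simp add: real_le_rsqrt)
  then show ?thesis
    by (simp add: heis_d_def heis_mult_def heis_inv_def heis_norm_def le_max_iff_disj)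
qed

lemma heis_d_hline_points:
  "heis_d (a*w + b, w, 1/2*b*w + c) (a*y + b, y, 1/2*b*y + c) = \<bar>w - y\<bar> * sqrt (1 + a\<^sup>2)"
proof -
  have "heis_mult (heis_inv (a*y + b, y, 1/2*b*y + c)) (a*w + b, w, 1/2*b*w + c)
      = (a * (w - y), w - y, 0)"
    by (simp add: heis_mult_def heis_inv_def field_simps)
  moreover have "(a * (w - y))\<^sup>2 + (w - y)\<^sup>2 = (w - y)\<^sup>2 * (1 + a\<^sup>2)"
    by (simp add: power2_eq_square algebra_simps)
  ultimately show ?thesis
    by (simp add: heis_d_def heis_norm_def real_sqrt_mult)
qed

lemma heis_d_iL_le_heis_d_hline:
  assumes "q \<in> hline a b c"
  shows "heis_d p (iL a b c p) \<le> 2 * (1 + \<bar>a\<bar>) * heis_d p q"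
proof -
  obtain x y t where p: "p = (x, y, t)"
    by (cases p) auto
  obtain w where q: "q = (a*w + b, w, 1/2*b*w + c)"
    using assms by (auto simp: hline_def)
  have iL: "iL a b c p = (a*y + b, y, 1/2*b*y + c)"
    by (simp add: iL_def p)
  have "sqrt (1 + a\<^sup>2) \<le> 1 + \<bar>a\<bar>"
    using sqrt_add_le_add_sqrt[of 1 "a\<^sup>2"] by simp
  moreover have "\<bar>w - y\<bar> \<le> heis_d p q"
    using abs_diff_snd_le_heis_d[of y w x t] by (simp add: p q abs_minus_commute)
  ultimately have "heis_d q (iL a b c p) \<le> heis_d p q * (1 + \<bar>a\<bar>)"
    unfolding iL q heis_d_hline_points by (intro mult_mono) auto
  then have "heis_d p (iL a b c p) \<le> heis_d p q + heis_d p q * (1 + \<bar>a\<bar>)"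
    using heis_d_triangle[of p "iL a b c p" q] by linarith
  moreover have "0 \<le> heis_d p q * \<bar>a\<bar>"
    by (simp add: heis_d_def heis_norm_nonneg)
  ultimately show ?thesis
    by (simp add: algebra_simps)
qed

theorem lemma4p12:
  shows "\<exists>A::real. A \<ge> 1 \<and> (\<forall>a b c x y t::real.
     heis_d (x,y,t) (iL a b c (x,y,t)) \<le> A * (1 + \<bar>a\<bar>) * heis_dist_set (x,y,t) (hline a b c))"
proof (intro exI[of _ 2] conjI allI)
  fix a b c x y t :: real
  have "hline a b c \<noteq> {}"
    by (auto simp: hline_def)
  then show "heis_d (x,y,t) (iL a b c (x,y,t)) \<le> 2 * (1 + \<bar>a\<bar>) * heis_dist_set (x,y,t) (hline a b c)"
    by (rule le_heis_dist_set[OF _ _ heis_d_iL_le_heis_d_hline]) (auto simp: add_pos_nonneg)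
qed simp

end
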